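(* Let $d_1,d_2\ge1$ be integers, $p_{i0}<\cdots<p_{id_i}$ reals for $i=1,2$, and $f_i:\{p_{i0},\dots,p_{id_i}\}\to\mathbb{R}$ arbitrary. Let $\sigma=(\sigma_1,\sigma_2)$ with $\sigma_i$ a permutation of $\{0,\dots,d_i\}$ such that $f_i(p_{i,\sigma_i(0)})\le\cdots\le f_i(p_{i,\sigma_i(d_i)})$ for $i=1,2$, and let $\tau=(\tau_1,\tau_2)$ be permutations with $f_1(p_{1,\tau_1(0)})\le\cdots\le f_1(p_{1,\tau_1(d_1)})$ and $f_2(p_{2,\tau_2(0)})\ge\cdots\ge f_2(p_{2,\tau_2(d_2)})$. Put $\psi^\sigma(\boldsymbol{j})=f_1(p_{1,\sigma_1(j_1)})f_2(p_{2,\sigma_2(j_2)})$ and $\psi^\tau(\boldsymbol{j})=f_1(p_{1,\tau_1(j_1)})f_2(p_{2,\tau_2(j_2)})$ for $\boldsymbol{j}\in\{0,\dots,d_1\}\times\{0,\dots,d_2\}$, and $N=d_1+d_2$. Then the set of $(\boldsymbol{x},\boldsymbol{z},\mu)$ with $\boldsymbol{z}\in\{0,1\}^{d_1+d_2}$, $(x_i,\boldsymbol{z}_i)\in B_i$ for $i=1,2$, $\boldsymbol{z}'=(L^\sigma)^{-1}(\boldsymbol{z})$, $\boldsymbol{z}''=(L^\tau)^{-1}(\boldsymbol{z})$ and, for every $\pi\in\Pi$ (with point representation $\boldsymbol{j}^0,\dots,\boldsymbol{j}^N$), $$\mu\le\psi^\sigma(\boldsymbol{j}^0)+\sum_{t\in[N]}(\psi^\sigma(\boldsymbol{j}^t)-\psi^\sigma(\boldsymbol{j}^{t-1}))z'_{\pi_t},\qquad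 \mu\ge\psi^\tau(\boldsymbol{j}^0)+\sum_{t\in[N]}(\psi^\tau(\boldsymbol{j}^t)-\psi^\tau(\boldsymbol{j}^{t-1}))z''_{\pi_t},$$ is an ideal MIP formulation of $\{(\boldsymbol{x},\mu)\in\mathbb{R}^2\times\mathbb{R}:\mu=f_1(x_1)f_2(x_2),\ x_i\in\{p_{i0},\dots,p_{id_i}\},\ i=1,2\}$.
   Context: Here $n=2$. $\Delta^d=\{\boldsymbol{z}\in\mathbb{R}^d:1\ge z_1\ge\cdots\ge z_d\ge0\}$; $\boldsymbol{z}=(\boldsymbol{z}_1,\boldsymbol{z}_2)$, $\boldsymbol{z}_i\in\mathbb{R}^{d_i}$. $B_i=\{(x_i,\boldsymbol{z}_i):x_i=p_{i0}+\sum_{j\in[d_i]}(p_{ij}-p_{i,j-1})z_{ij},\ \boldsymbol{z}_i\in\Delta^{d_i}\}$. A staircase is $\pi=(\pi_1,\dots,\pi_N)$, $\pi_t=(\pi_t(1),\pi_t(2))$, $\pi_t(1)\in\{1,2\}$, each $i$ occurring as $\pi_t(1)$ exactly $d_i$ times, $\pi_t(2)=|\{s\le t:\pi_s(1)=\pi_t(1)\}|$; $\Pi$ is the set of staircases; $z_{\pi_t}:=z_{\pi_t(1),\pi_t(2)}$; point representation $\boldsymbol{j}^0=(0,0)$, $\boldsymbol{j}^t=\boldsymbol{j}^{t-1}+\boldsymbol{e}_{\pi_t(1)}$. For a permutation $\rho_i$ of $\{0,\dots,d_i\}$: $T_i:\boldsymbol{z}_i\mapsto\boldsymbol{\lambda}_i\in\mathbb{R}^{d_i+1}$,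 $\lambda_{ij}=z_{ij}-z_{i,j+1}$ ($j=0,\dots,d_i$, $z_{i0}=1$, $z_{i,d_i+1}=0$), $T_i^{-1}:z_{ij}=\sum_{k=j}^{d_i}\lambda_{ik}$; $P^{\rho_i}$ the permutation matrix with $(j,k)$ entry $1$ iff $j=\rho_i(k)$; $L^{\rho_i}=T_i^{-1}\circ P^{\rho_i}\circ T_i$ and $L^\rho(\boldsymbol{z}')=(L^{\rho_1}(\boldsymbol{z}'_1),L^{\rho_2}(\boldsymbol{z}'_2))$ (an invertible affine map). An MIP formulation of $S$ is a polyhedron with binary restrictions whose projection onto original variables equals $S$; ideal means every vertex of the LP relaxation has binary values in the binary-restricted variables. *)

theory Defs
  imports "HOL-Analysis.Analysis" "HOL-Combinatorics.Permutations"
begin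

text \<open>Points of the extended space are triples (x, z, mu) with x :: nat => real
  (only x 1, x 2 relevant), z :: nat => nat => real (z i j for i in {1,2}, j in {1..d i})
  and mu :: real.  All irrelevant coordinates are forced to 0 inside the polyhedron,
  so the space is effectively R^2 x R^(d1+d2) x R.\<close>

type_synonym point = "(nat \<Rightarrow> real) \<times> (nat \<Rightarrow> nat \<Rightarrow> real) \<times> real"

definition comb :: "real \<Rightarrow> point \<Rightarrow> point \<Rightarrow> point" where
  "comb t a b = (\<lambda>i. t * fst a i + (1 - t) * fst b i,
                 \<lambda>i j. t * fst (snd a) i j + (1 - t) * fst (snd b) i j,
                 t * snd (snd a) + (1 - t) * snd (snd b))"

definition is_vertex :: "point \<Rightarrow> point set \<Rightarrow> bool" where
  "is_vertex v Q \<longleftrightarrow> v \<in> Q \<and>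
     \<not> (\<exists>a\<in>Q. \<exists>b\<in>Q. \<exists>t. a \<noteq> b \<and> 0 < t \<and> t < 1 \<and> v = comb t a b)"

definition ideal_MIP_formulation ::
  "point set \<Rightarrow> (point \<Rightarrow> bool) \<Rightarrow> (point \<Rightarrow> 'b) \<Rightarrow> 'b set \<Rightarrow> bool" where
  "ideal_MIP_formulation Q bin proj S \<longleftrightarrow>
     proj ` {v \<in> Q. bin v} = S \<and> (\<forall>v. is_vertex v Q \<longrightarrow> bin v)"

definition in_Delta :: "nat \<Rightarrow> (nat \<Rightarrow> real) \<Rightarrow> bool" where
  "in_Delta d z \<longleftrightarrow> (d \<ge> 1 \<longrightarrow> z 1 \<le> 1 \<and> z d \<ge> 0) \<and>
                      (\<forall>j. 1 \<le> j \<and> j < d \<longrightarrow> z (j+1) \<le> z j)"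

definition in_B :: "nat \<Rightarrow> (nat \<Rightarrow> real) \<Rightarrow> real \<Rightarrow> (nat \<Rightarrow> real) \<Rightarrow> bool" where
  "in_B d p x z \<longleftrightarrow> x = p 0 + (\<Sum>j\<in>{1..d}. (p j - p (j - 1)) * z j) \<and> in_Delta d z"

definition Tmap :: "nat \<Rightarrow> (nat \<Rightarrow> real) \<Rightarrow> nat \<Rightarrow> real" where
  "Tmap d z j = (let ze = (\<lambda>m. if m = 0 then 1 else if m \<le> d then z m else 0)
                  in ze j - ze (j + 1))"

definition Tinv :: "nat \<Rightarrow> (nat \<Rightarrow> real) \<Rightarrow> nat \<Rightarrow> real" where
  "Tinv d lam j = (\<Sum>k\<in>{j..d}. lam k)"

definition Pmat :: "nat \<Rightarrow> (nat \<Rightarrow> nat) \<Rightarrow> (nat \<Rightarrow> real) \<Rightarrow> nat \<Rightarrow> real" where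
  "Pmat d \<rho> lam j = (\<Sum>k\<in>{0..d}. (if j = \<rho> k then 1 else 0) * lam k)"

definition Lmap :: "nat \<Rightarrow> (nat \<Rightarrow> nat) \<Rightarrow> (nat \<Rightarrow> real) \<Rightarrow> nat \<Rightarrow> real" where
  "Lmap d \<rho> z = Tinv d (Pmat d \<rho> (Tmap d z))"

text \<open>Staircases: s t = pi_t(1) for t in {1..N}; i occurs exactly d i times.\<close>
definition is_staircase :: "(nat \<Rightarrow> nat) \<Rightarrow> (nat \<Rightarrow> nat) \<Rightarrow> bool" where
  "is_staircase d s \<longleftrightarrow> (\<forall>t\<in>{1..d 1 + d 2}. s t \<in> {1, 2}) \<and>
     (\<forall>i\<in>{1,2}. card {t\<in>{1..d 1 + d 2}. s t = i} = d i)"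

text \<open>pi_t(2) = |{u <= t : pi_u(1) = pi_t(1)}|.\<close>
definition stair2 :: "(nat \<Rightarrow> nat) \<Rightarrow> nat \<Rightarrow> nat" where
  "stair2 s t = card {u\<in>{1..t}. s u = s t}"

fun jpt :: "(nat \<Rightarrow> nat) \<Rightarrow> nat \<Rightarrow> nat \<times> nat" where
  "jpt s 0 = (0, 0)"
| "jpt s (Suc t) = (let (a, b) = jpt s t in
                     if s (Suc t) = 1 then (a + 1, b) else (a, b + 1))"

definition stair_rhs :: "(nat \<times> nat \<Rightarrow> real) \<Rightarrow> (nat \<Rightarrow> nat) \<Rightarrow> (nat \<Rightarrow> nat) \<Rightarrow>
                         (nat \<Rightarrow> nat \<Rightarrow> real) \<Rightarrow> real" where
  "stair_rhs psi d s zz = psi (jpt s 0) +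
     (\<Sum>t\<in>{1..d 1 + d 2}. (psi (jpt s t) - psi (jpt s (t - 1))) * zz (s t) (stair2 s t))"

definition psi :: "(nat \<Rightarrow> real \<Rightarrow> real) \<Rightarrow> (nat \<Rightarrow> nat \<Rightarrow> real) \<Rightarrow> (nat \<Rightarrow> nat \<Rightarrow> nat)
                   \<Rightarrow> nat \<times> nat \<Rightarrow> real" where
  "psi f p \<rho> jj = f 1 (p 1 (\<rho> 1 (fst jj))) * f 2 (p 2 (\<rho> 2 (snd jj)))"

definition Qset :: "(nat \<Rightarrow> nat) \<Rightarrow> (nat \<Rightarrow> nat \<Rightarrow> real) \<Rightarrow> (nat \<Rightarrow> real \<Rightarrow> real)
                   \<Rightarrow> (nat \<Rightarrow> nat \<Rightarrow> nat) \<Rightarrow> (nat \<Rightarrow> nat \<Rightarrow> nat) \<Rightarrow> point set" where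
  "Qset d p f \<sigma> \<tau> = {(x, z, \<mu>).
     (\<forall>i. i \<notin> {1,2} \<longrightarrow> x i = 0) \<and>
     (\<forall>i j. \<not> (i \<in> {1,2} \<and> j \<in> {1..d i}) \<longrightarrow> z i j = 0) \<and>
     (\<forall>i\<in>{1,2}. in_B (d i) (p i) (x i) (z i)) \<and>
     (\<exists>z' z''.
        (\<forall>i\<in>{1,2}. \<forall>j\<in>{1..d i}. z i j = Lmap (d i) (\<sigma> i) (z' i) j) \<and>
        (\<forall>i\<in>{1,2}. \<forall>j\<in>{1..d i}. z i j = Lmap (d i) (\<tau> i) (z'' i) j) \<and>
        (\<forall>s. is_staircase d s \<longrightarrow>
              \<mu> \<le> stair_rhs (psi f p \<sigma>) d s z' \<and>
              \<mu> \<ge> stair_rhs (psi f p \<tau>) d s z''))}"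

definition binary_z :: "(nat \<Rightarrow> nat) \<Rightarrow> point \<Rightarrow> bool" where
  "binary_z d v \<longleftrightarrow> (\<forall>i\<in>{1,2}. \<forall>j\<in>{1..d i}. fst (snd v) i j \<in> {0, 1})"

definition proj_xmu :: "point \<Rightarrow> (nat \<Rightarrow> real) \<times> real" where
  "proj_xmu v = (fst v, snd (snd v))"

definition Sset :: "(nat \<Rightarrow> nat) \<Rightarrow> (nat \<Rightarrow> nat \<Rightarrow> real) \<Rightarrow> (nat \<Rightarrow> real \<Rightarrow> real)
                   \<Rightarrow> ((nat \<Rightarrow> real) \<times> real) set" where
  "Sset d p f = {(x, \<mu>). (\<forall>i. i \<notin> {1,2} \<longrightarrow> x i = 0) \<and>
      \<mu> = f 1 (x 1) * f 2 (x 2) \<and> (\<forall>i\<in>{1,2}. x i \<in> p i ` {0..d i})}"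

end

(* A binary point of the relaxation has each z_i equal to the unary code of a breakpoint index,
   so x = (p_1a, p_2b), and z' = (L^sigma)^-1 z, z'' = (L^tau)^-1 z are unary codes as well.  By the
   sorting hypotheses psi^sigma and -psi^tau are supermodular on the grid, which makes the right-hand
   side of every staircase inequality an upper (resp. lower) bound for f_1(p_1a) f_2(p_2b), attained
   by any staircase through the grid point; so mu is pinned to the product.
   For idealness, sort the coordinates of z' along a staircase by greedily merging the two
   nonincreasing sequences z'_1, z'_2.  Summation by parts writes (x, z, U), with U the right-hand
   side of that staircase, as a convex combination of binary points of the relaxation; likewise
   (x, z, L) for z'' and tau.  A vertex (x, z, mu) has L <= mu <= U, so it lies on the segment
   between these two points, hence equals one of them and then one of the binary points. *)

theory Submission
  imports Defs
begin

section \<open>Unary codes and the maps Lmap\<close>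

definition unary :: "nat \<Rightarrow> nat \<Rightarrow> real" where
  "unary a j = (if j \<le> a then 1 else 0)"

definition pad :: "nat \<Rightarrow> (nat \<Rightarrow> real) \<Rightarrow> nat \<Rightarrow> real" where
  "pad d y m = (if m = 0 then 1 else if m \<le> d then y m else 0)"

lemma Tmap_eq_pad: "Tmap d y k = pad d y k - pad d y (Suc k)"
  by (simp add: Tmap_def pad_def Let_def)

lemma sum_Tmap_from:
  assumes "j \<le> Suc d" shows "(\<Sum>k\<in>{j..d}. Tmap d y k) = pad d y j"
proof -
  have "(\<Sum>k\<in>{j..d}. Tmap d y k) = - (\<Sum>k=j..d. pad d y (Suc k) - pad d y k)"
    by (simp add: Tmap_eq_pad sum_negf[symmetric])
  also have "\<dots> = pad d y j - pad d y (Suc d)"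
    using assms by (subst sum_Suc_diff) auto
  finally show ?thesis by (simp add: pad_def)
qed

lemma sum_Tmap: "(\<Sum>k\<in>{0..d}. Tmap d y k) = 1"
  using sum_Tmap_from[of 0 d y] by (simp add: pad_def)

lemma Tmap_nonneg:
  assumes "in_Delta d y" "k \<le> d" shows "0 \<le> Tmap d y k"
  using assms by (cases "k = d") (auto simp: Tmap_def Let_def in_Delta_def)

lemma Tmap_cong: "\<forall>j\<in>{1..d}. y j = y' j \<Longrightarrow> Tmap d y = Tmap d y'"
  by (auto simp: Tmap_def Let_def fun_eq_iff)

lemma Lmap_cong: "\<forall>j\<in>{1..d}. y j = y' j \<Longrightarrow> Lmap d \<rho> y = Lmap d \<rho> y'"
  unfolding Lmap_def by (metis Tmap_cong)

lemma Lmap_eq_sum: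
  assumes "\<rho> permutes {0..d}"
  shows "Lmap d \<rho> y j = (\<Sum>k\<in>{0..d}. of_bool (j \<le> \<rho> k) * Tmap d y k)"
proof -
  have "Lmap d \<rho> y j = (\<Sum>m\<in>{j..d}. \<Sum>k\<in>{0..d}. (if m = \<rho> k then 1 else 0) * Tmap d y k)"
    by (simp add: Lmap_def Tinv_def Pmat_def)
  also have "\<dots> = (\<Sum>k\<in>{0..d}. \<Sum>m\<in>{j..d}. (if m = \<rho> k then 1 else 0) * Tmap d y k)"
    by (rule sum.swap)
  also have "\<dots> = (\<Sum>k\<in>{0..d}. of_bool (j \<le> \<rho> k) * Tmap d y k)"
    using permutes_in_image[OF assms]
    by (intro sum.cong refl) (simp add: if_distrib[of "\<lambda>x. x * _"] sum.delta cong: if_cong)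
  finally show ?thesis .
qed

lemma pad_Lmap:
  assumes "\<rho> permutes {0..d}" "m \<le> Suc d"
  shows "pad d (Lmap d \<rho> y) m = (\<Sum>k\<in>{0..d}. of_bool (m \<le> \<rho> k) * Tmap d y k)"
proof -
  consider "m = 0" | "1 \<le> m \<and> m \<le> d" | "m = Suc d" using assms(2) by linarith
  then show ?thesis
  proof cases
    case 3
    have "\<rho> k \<le> d" if "k \<le> d" for k
      using permutes_in_image[OF assms(1)] that by simp
    then have "\<forall>k\<in>{0..d}. \<not> m \<le> \<rho> k" using 3 by (auto simp: not_le le_imp_less_Suc)
    then show ?thesis using 3 by (simp add: pad_def)
  qed (simp_all add: pad_def sum_Tmap Lmap_eq_sum[OF assms(1)])
qed

lemma Tmap_Lmap:
  assumes "\<rho> permutes {0..d}" "m \<le> d"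
  shows "Tmap d (Lmap d \<rho> y) m = Tmap d y (inv \<rho> m)"
proof -
  have "Tmap d (Lmap d \<rho> y) m
      = (\<Sum>k\<in>{0..d}. (of_bool (m \<le> \<rho> k) - of_bool (Suc m \<le> \<rho> k)) * Tmap d y k)"
    unfolding Tmap_eq_pad[of d "Lmap d \<rho> y"] using assms
    by (simp only: pad_Lmap le_SucI Suc_le_mono sum_subtractf[symmetric] left_diff_distrib)
  also have "\<dots> = (\<Sum>k\<in>{0..d}. if k = inv \<rho> m then Tmap d y k else 0)"
  proof (rule sum.cong[OF refl])
    fix k
    have "\<rho> k = m \<longleftrightarrow> k = inv \<rho> m" using permutes_inv_eq[OF assms(1)] by metis
    then show "(of_bool (m \<le> \<rho> k) - of_bool (Suc m \<le> \<rho> k)) * Tmap d y k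
        = (if k = inv \<rho> m then Tmap d y k else 0)" by auto
  qed
  also have "\<dots> = Tmap d y (inv \<rho> m)"
    using assms permutes_in_image[OF permutes_inv[OF assms(1)]] by (simp add: sum.delta')
  finally show ?thesis .
qed

lemma Lmap_inv_Lmap:
  assumes "\<rho> permutes {0..d}" "j \<in> {1..d}"
  shows "Lmap d (inv \<rho>) (Lmap d \<rho> y) j = y j"
proof -
  have inv: "inv \<rho> permutes {0..d}" using permutes_inv[OF assms(1)] .
  have "Lmap d (inv \<rho>) (Lmap d \<rho> y) j
      = (\<Sum>m\<in>{0..d}. of_bool (j \<le> inv \<rho> m) * Tmap d y (inv \<rho> m))"
    using Tmap_Lmap[OF assms(1)] by (simp add: Lmap_eq_sum[OF inv])
  also have "\<dots> = (\<Sum>k\<in>{0..d}. of_bool (j \<le> k) * Tmap d y k)"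
    by (rule sum.reindex_bij_betw[OF permutes_imp_bij[OF inv]])
  also have "\<dots> = (\<Sum>k\<in>{j..d}. Tmap d y k)"
    by (rule sum.mono_neutral_cong_right) auto
  also have "\<dots> = y j" using assms(2) by (simp add: sum_Tmap_from pad_def)
  finally show ?thesis .
qed

lemma Lmap_inverse_on:
  assumes "\<rho> permutes {0..d}" "\<forall>j\<in>{1..d}. z j = Lmap d \<rho> y j" "j \<in> {1..d}"
  shows "y j = Lmap d (inv \<rho>) z j"
  using Lmap_cong[OF assms(2), of "inv \<rho>"] Lmap_inv_Lmap[OF assms(1,3)] by simp

lemma Lmap_unary:
  assumes "\<rho> permutes {0..d}" "a \<le> d"
  shows "Lmap d \<rho> (unary a) j = unary (\<rho> a) j"
proof -
  have "Tmap d (unary a) k = of_bool (k = a)" if "k \<le> d" for k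
    using assms(2) that by (auto simp: Tmap_def unary_def Let_def)
  then have "Lmap d \<rho> (unary a) j = (\<Sum>k\<in>{0..d}. if k = a then of_bool (j \<le> \<rho> k) else 0)"
    by (auto simp: Lmap_eq_sum[OF assms(1)] intro!: sum.cong)
  also have "\<dots> = unary (\<rho> a) j" using assms(2) by (simp add: sum.delta' unary_def)
  finally show ?thesis .
qed

lemma in_Delta_Lmap:
  assumes "\<rho> permutes {0..d}" "in_Delta d y"
  shows "in_Delta d (Lmap d \<rho> y)"
proof -
  have T: "0 \<le> Tmap d y k" if "k \<in> {0..d}" for k using Tmap_nonneg assms(2) that by auto
  have "Lmap d \<rho> y 1 \<le> (\<Sum>k\<in>{0..d}. Tmap d y k)"
    unfolding Lmap_eq_sum[OF assms(1)] using T by (intro sum_mono) auto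
  moreover have "0 \<le> Lmap d \<rho> y d"
    unfolding Lmap_eq_sum[OF assms(1)] using T by (intro sum_nonneg) auto
  moreover have "Lmap d \<rho> y (j + 1) \<le> Lmap d \<rho> y j" for j
    unfolding Lmap_eq_sum[OF assms(1)] using T by (intro sum_mono) auto
  ultimately show ?thesis by (simp add: in_Delta_def sum_Tmap)
qed

lemma Lmap_affine:
  assumes "\<rho> permutes {0..d}" "(\<Sum>t\<in>A. w t) = 1"
    and "\<forall>k\<in>{1..d}. y k = (\<Sum>t\<in>A. w t * Y t k)"
  shows "Lmap d \<rho> y j = (\<Sum>t\<in>A. w t * Lmap d \<rho> (Y t) j)"
proof -
  have "pad d y m = (\<Sum>t\<in>A. w t * pad d (Y t) m)" for m
    using assms(2,3) by (auto simp: pad_def sum_distrib_right[symmetric])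
  then have T: "Tmap d y k = (\<Sum>t\<in>A. w t * Tmap d (Y t) k)" for k
    by (simp add: Tmap_eq_pad sum_subtractf[symmetric] right_diff_distrib)
  show ?thesis
    unfolding Lmap_eq_sum[OF assms(1)] T sum_distrib_left by (subst sum.swap) (simp only: mult_ac)
qed

lemma Lmap_comb:
  assumes "\<rho> permutes {0..d}"
  shows "Lmap d \<rho> (\<lambda>k. \<theta> * y k + (1 - \<theta>) * y' k) j = \<theta> * Lmap d \<rho> y j + (1 - \<theta>) * Lmap d \<rho> y' j"
  using Lmap_affine[OF assms, of "\<lambda>t. if t then \<theta> else 1 - \<theta>" UNIV "\<lambda>k. \<theta> * y k + (1 - \<theta>) * y' k"
      "\<lambda>t. if t then y else y'"] by (simp add: UNIV_bool)

lemma in_Delta_antimono: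
  assumes "in_Delta d y" "1 \<le> j" "j \<le> k" "k \<le> d" shows "y k \<le> y j"
  using assms(3,4)
proof (induction k rule: dec_induct)
  case (step n)
  then have "y (n + 1) \<le> y n" using assms(1,2) by (auto simp: in_Delta_def)
  with step show ?case by simp
qed simp

lemma in_Delta_bounds:
  assumes "in_Delta d y" "j \<in> {1..d}" shows "0 \<le> y j" "y j \<le> 1"
  using in_Delta_antimono[OF assms(1), of j d] in_Delta_antimono[OF assms(1), of 1 j] assms
  by (auto simp: in_Delta_def)

lemma in_Delta_cong: "in_Delta d y \<Longrightarrow> \<forall>j\<in>{1..d}. y j = y' j \<Longrightarrow> in_Delta d y'"
  by (simp add: in_Delta_def)

lemma in_Delta_unary: "in_Delta d (unary a)"
  by (simp add: in_Delta_def unary_def)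

lemma in_Delta_comb:
  assumes "in_Delta d y" "in_Delta d y'" "0 \<le> \<theta>" "\<theta> \<le> 1"
  shows "in_Delta d (\<lambda>j. \<theta> * y j + (1 - \<theta>) * y' j)"
proof -
  have mono: "\<theta> * u + (1 - \<theta>) * u' \<le> \<theta> * v + (1 - \<theta>) * v'"
    if "u \<le> v" "u' \<le> v'" for u u' v v' :: real
    using mult_left_mono[OF that(1) assms(3)] mult_left_mono[OF that(2), of "1 - \<theta>"] assms(4) by simp
  show ?thesis using assms(1,2) mono[of "y 1" 1 "y' 1" 1] mono[of 0 "y d" 0 "y' d"] mono
    by (auto simp: in_Delta_def)
qed

lemma binary_in_Delta_unary:
  assumes "in_Delta d y" "\<forall>j\<in>{1..d}. y j \<in> {0, 1}"
  obtains a where "a \<le> d" "\<forall>j\<in>{1..d}. y j = unary a j"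
proof
  define a where "a = Max (insert 0 {j\<in>{1..d}. y j = 1})"
  have a: "a = 0 \<or> a \<in> {j\<in>{1..d}. y j = 1}"
    unfolding a_def using Max_in[of "insert 0 {j\<in>{1..d}. y j = 1}"] by auto
  show "a \<le> d" using a by auto
  show "\<forall>j\<in>{1..d}. y j = unary a j"
  proof
    fix j assume j: "j \<in> {1..d}"
    show "y j = unary a j"
    proof (cases "j \<le> a")
      case True
      then have "1 \<le> y j" using a j in_Delta_antimono[OF assms(1), of j a] by auto
      then show ?thesis using True assms(2) j by (force simp: unary_def)
    next
      case False
      then have "y j \<noteq> 1" using j by (auto simp: a_def intro: Max_ge)
      then show ?thesis using False assms(2) j by (auto simp: unary_def)
    qed
  qed
qed

lemma breakpoint_unary:
  fixes q :: "nat \<Rightarrow> real"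
  assumes "a \<le> d" shows "q a = q 0 + (\<Sum>j\<in>{1..d}. (q j - q (j - 1)) * unary a j)"
proof -
  have "(\<Sum>j\<in>{1..d}. (q j - q (j - 1)) * unary a j) = (\<Sum>j\<in>{Suc 0..a}. q j - q (j - 1))"
    using assms by (intro sum.mono_neutral_cong_right) (auto simp: unary_def)
  also have "\<dots> = q a - q 0" by (rule sum_telescope'') simp
  finally show ?thesis by simp
qed

lemma in_B_unary_iff:
  assumes "a \<le> d" "\<forall>j\<in>{1..d}. z j = unary a j"
  shows "in_B d q x z \<longleftrightarrow> x = q a"
proof -
  have "in_Delta d z" using in_Delta_cong[OF in_Delta_unary, of d a z] assms(2) by simp
  moreover have "(\<Sum>j\<in>{1..d}. (q j - q (j - 1)) * z j) = (\<Sum>j\<in>{1..d}. (q j - q (j - 1)) * unary a j)"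
    using assms(2) by simp
  ultimately show ?thesis using breakpoint_unary[OF assms(1), of q] by (auto simp: in_B_def)
qed

lemma in_B_comb:
  assumes "in_B d q x y" "in_B d q x' y'" "0 \<le> \<theta>" "\<theta> \<le> 1"
  shows "in_B d q (\<theta> * x + (1 - \<theta>) * x') (\<lambda>j. \<theta> * y j + (1 - \<theta>) * y' j)"
proof -
  have "(\<Sum>j\<in>{1..d}. (q j - q (j - 1)) * (\<theta> * y j + (1 - \<theta>) * y' j)) =
      \<theta> * (\<Sum>j\<in>{1..d}. (q j - q (j - 1)) * y j) + (1 - \<theta>) * (\<Sum>j\<in>{1..d}. (q j - q (j - 1)) * y' j)"
    by (simp add: sum_distrib_left sum.distrib[symmetric] algebra_simps)
  then show ?thesis using assms in_Delta_comb by (simp add: in_B_def algebra_simps)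
qed

section \<open>Staircases\<close>

definition coord :: "nat \<times> nat \<Rightarrow> nat \<Rightarrow> nat" where
  "coord c i = (if i = 1 then fst c else snd c)"

definition grid :: "(nat \<Rightarrow> nat) \<Rightarrow> (nat \<times> nat) set" where
  "grid d = {0..d 1} \<times> {0..d 2}"

lemma mem_grid_coord: "c \<in> grid d \<longleftrightarrow> (\<forall>i\<in>{1,2}. coord c i \<le> d i)"
  by (cases c) (auto simp: grid_def coord_def)

lemma coord_jpt_Suc:
  assumes "s (Suc t) \<in> {1,2}" "i \<in> {1,2}"
  shows "coord (jpt s (Suc t)) i = coord (jpt s t) i + of_bool (s (Suc t) = i)"
  using assms by (auto simp: coord_def split_def Let_def)

lemma coord_jpt_mono:
  assumes "t \<le> t'" shows "coord (jpt s t) i \<le> coord (jpt s t') i"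
  using assms by (induction t' rule: dec_induct) (auto simp: coord_def split_def Let_def)

lemma coord_jpt_card:
  assumes "\<forall>u\<in>{1..t}. s u \<in> {1,2}" "i \<in> {1,2}"
  shows "coord (jpt s t) i = card {u\<in>{1..t}. s u = i}"
  using assms(1)
proof (induction t)
  case (Suc t)
  have "{u\<in>{1..Suc t}. s u = i} = (if s (Suc t) = i then insert (Suc t) else id) {u\<in>{1..t}. s u = i}"
    by (auto simp: le_Suc_eq)
  then show ?case using Suc coord_jpt_Suc[of s t i] assms(2) by (simp add: card_insert_disjoint)
qed (simp add: coord_def)

lemma staircase_dir: "is_staircase d s \<Longrightarrow> t \<in> {1..d 1 + d 2} \<Longrightarrow> s t \<in> {1,2}"
  by (simp add: is_staircase_def)

lemma jpt_final:
  assumes "is_staircase d s" shows "jpt s (d 1 + d 2) = (d 1, d 2)"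
proof -
  have "coord (jpt s (d 1 + d 2)) i = d i" if "i \<in> {1,2}" for i
    using coord_jpt_card[of "d 1 + d 2" s i] assms that unfolding is_staircase_def by auto
  from this[of 1] this[of 2] show ?thesis by (simp add: coord_def prod_eq_iff)
qed

lemma is_staircaseI:
  assumes "\<forall>t\<in>{1..d 1 + d 2}. s t \<in> {1,2}" "jpt s (d 1 + d 2) = (d 1, d 2)"
  shows "is_staircase d s"
  using assms coord_jpt_card[OF assms(1), of 1] coord_jpt_card[OF assms(1), of 2]
  by (simp add: is_staircase_def coord_def)

lemma jpt_in_grid:
  assumes "is_staircase d s" "t \<le> d 1 + d 2" shows "jpt s t \<in> grid d"
  using coord_jpt_mono[OF assms(2), of s 1] coord_jpt_mono[OF assms(2), of s 2] jpt_final[OF assms(1)]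
  by (simp add: grid_def coord_def mem_Times_iff)

lemma stair2_eq_coord:
  assumes "is_staircase d s" "t \<in> {1..d 1 + d 2}"
  shows "stair2 s t = coord (jpt s t) (s t)"
  using coord_jpt_card[of t s "s t"] staircase_dir[OF assms(1)] assms(2)
  by (simp add: stair2_def)

lemma stair2_range:
  assumes "is_staircase d s" "t \<in> {1..d 1 + d 2}"
  shows "stair2 s t \<in> {1..d (s t)}"
proof -
  obtain u where u: "t = Suc u" using assms(2) by (cases t) auto
  have "s t \<in> {1,2}" using staircase_dir[OF assms] .
  then show ?thesis
    using stair2_eq_coord[OF assms] coord_jpt_Suc[of s u "s t"] u jpt_in_grid[OF assms(1), of t] assms(2)
    by (auto simp: mem_grid_coord)
qed

lemma stair_rhs_cong:
  assumes "is_staircase d s" "\<forall>i\<in>{1,2}. \<forall>j\<in>{1..d i}. zz i j = zz' i j"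
  shows "stair_rhs \<psi> d s zz = stair_rhs \<psi> d s zz'"
proof -
  have "zz (s t) (stair2 s t) = zz' (s t) (stair2 s t)" if "t \<in> {1..d 1 + d 2}" for t
    using staircase_dir[OF assms(1) that] stair2_range[OF assms(1) that] assms(2) by blast
  then show ?thesis by (simp add: stair_rhs_def)
qed

lemma stair_rhs_comb:
  "stair_rhs \<psi> d s (\<lambda>i j. \<theta> * zz i j + (1 - \<theta>) * zz' i j)
    = \<theta> * stair_rhs \<psi> d s zz + (1 - \<theta>) * stair_rhs \<psi> d s zz'"
  by (simp add: stair_rhs_def sum_distrib_left sum.distrib[symmetric] algebra_simps)

lemma stair_rhs_uminus: "stair_rhs (\<lambda>c. - \<psi> c) d s zz = - stair_rhs \<psi> d s zz"
  by (simp add: stair_rhs_def sum_negf[symmetric] algebra_simps)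

section \<open>Supermodular functions on the grid\<close>

definition supermodular_grid :: "(nat \<Rightarrow> nat) \<Rightarrow> (nat \<times> nat \<Rightarrow> real) \<Rightarrow> bool" where
  "supermodular_grid d \<psi> \<longleftrightarrow>
     (\<forall>j1<d 1. \<forall>j2<d 2. \<psi> (j1 + 1, j2) + \<psi> (j1, j2 + 1) \<le> \<psi> (j1, j2) + \<psi> (j1 + 1, j2 + 1))"

lemma supermodular_grid_increment_fst:
  assumes "supermodular_grid d \<psi>" "j1 < d 1" "b \<le> j2" "j2 \<le> d 2"
  shows "\<psi> (j1 + 1, b) - \<psi> (j1, b) \<le> \<psi> (j1 + 1, j2) - \<psi> (j1, j2)"
  using assms(3,4)
proof (induction j2 rule: dec_induct)
  case (step n)
  have "\<psi> (j1 + 1, n) + \<psi> (j1, n + 1) \<le> \<psi> (j1, n) + \<psi> (j1 + 1, n + 1)"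
    using assms(1,2) step by (simp add: supermodular_grid_def)
  then show ?case using step by simp
qed simp

lemma supermodular_grid_increment_snd:
  assumes "supermodular_grid d \<psi>" "j2 < d 2" "a \<le> j1" "j1 \<le> d 1"
  shows "\<psi> (a, j2 + 1) - \<psi> (a, j2) \<le> \<psi> (j1, j2 + 1) - \<psi> (j1, j2)"
  using assms(3,4)
proof (induction j1 rule: dec_induct)
  case (step n)
  have "\<psi> (n + 1, j2) + \<psi> (n, j2 + 1) \<le> \<psi> (n, j2) + \<psi> (n + 1, j2 + 1)"
    using assms(1,2) step by (simp add: supermodular_grid_def)
  then show ?case using step by simp
qed simp

lemma supermodular_grid_prod:
  assumes "\<forall>k<d 1. A k \<le> A (k + 1)" "\<forall>k<d 2. B k \<le> B (k + 1)"
  shows "supermodular_grid d (\<lambda>c. A (fst c) * B (snd c))"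
  unfolding supermodular_grid_def
proof (intro allI impI)
  fix j1 j2 assume "j1 < d 1" "j2 < d 2"
  then have "0 \<le> (A (j1 + 1) - A j1) * (B (j2 + 1) - B j2)" using assms by simp
  then show "A (fst (j1 + 1, j2)) * B (snd (j1 + 1, j2)) + A (fst (j1, j2 + 1)) * B (snd (j1, j2 + 1))
      \<le> A (fst (j1, j2)) * B (snd (j1, j2)) + A (fst (j1 + 1, j2 + 1)) * B (snd (j1 + 1, j2 + 1))"
    by (simp add: algebra_simps)
qed

definition unary_pair :: "nat \<times> nat \<Rightarrow> nat \<Rightarrow> nat \<Rightarrow> real" where
  "unary_pair c i = unary (coord c i)"

(* Clipping the staircase at c gives a monotone path from (0, 0) to c; by supermodularity each of
   its increments is at most the corresponding term of the staircase inequality. *)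
definition clip :: "nat \<times> nat \<Rightarrow> nat \<times> nat \<Rightarrow> nat \<times> nat" where
  "clip c e = (min (fst e) (fst c), min (snd e) (snd c))"

lemma stair_step_le_clipped:
  assumes "is_staircase d s" "supermodular_grid d \<psi>" "c \<in> grid d" "t \<in> {1..d 1 + d 2}"
  shows "\<psi> (clip c (jpt s t)) - \<psi> (clip c (jpt s (t - 1)))
           \<le> (\<psi> (jpt s t) - \<psi> (jpt s (t - 1))) * unary_pair c (s t) (stair2 s t)"
proof -
  obtain u where u: "t = Suc u" using assms(4) by (cases t) auto
  obtain j1 j2 where j: "jpt s u = (j1, j2)" by (cases "jpt s u")
  obtain a b where c: "c = (a, b)" by (cases c)
  have bounds: "j1 \<le> d 1" "j2 \<le> d 2" "a \<le> d 1" "b \<le> d 2"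
    using jpt_in_grid[OF assms(1), of u] assms(3,4) u j c by (auto simp: grid_def)
  have stair2: "stair2 s t = coord (jpt s t) (s t)" using stair2_eq_coord[OF assms(1,4)] .
  consider "s t = 1" | "s t = 2" using staircase_dir[OF assms(1,4)] by auto
  then show ?thesis
  proof cases
    case 1
    then have "jpt s t = (j1 + 1, j2)" using u j by (simp add: split_def Let_def)
    then show ?thesis
      using 1 u j c stair2 bounds supermodular_grid_increment_fst[OF assms(2), of j1 "min j2 b" j2]
      by (cases "j1 < a") (auto simp: clip_def unary_pair_def unary_def coord_def min_def)
  next
    case 2
    then have "jpt s t = (j1, j2 + 1)" using u j by (simp add: split_def Let_def)
    then show ?thesis
      using 2 u j c stair2 bounds supermodular_grid_increment_snd[OF assms(2), of j2 "min j1 a" j1]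
      by (cases "j2 < b") (auto simp: clip_def unary_pair_def unary_def coord_def min_def)
  qed
qed

lemma supermodular_le_stair_rhs:
  assumes "is_staircase d s" "supermodular_grid d \<psi>" "c \<in> grid d"
  shows "\<psi> c \<le> stair_rhs \<psi> d s (unary_pair c)"
proof -
  have "clip c (jpt s (d 1 + d 2)) = c" "clip c (jpt s 0) = (0, 0)"
    using jpt_final[OF assms(1)] assms(3) by (auto simp: clip_def grid_def)
  then have "\<psi> c = \<psi> (jpt s 0) + (\<Sum>t\<in>{1..d 1 + d 2}. \<psi> (clip c (jpt s t)) - \<psi> (clip c (jpt s (t - 1))))"
    using sum_telescope''[of 0 "d 1 + d 2" "\<lambda>t. \<psi> (clip c (jpt s t))"] by simp
  also have "\<dots> \<le> stair_rhs \<psi> d s (unary_pair c)"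
    unfolding stair_rhs_def using stair_step_le_clipped[OF assms] by (intro add_left_mono sum_mono) auto
  finally show ?thesis .
qed

lemma stair_rhs_through:
  assumes "is_staircase d s" "c \<in> grid d" "jpt s (fst c + snd c) = c"
  shows "stair_rhs \<psi> d s (unary_pair c) = \<psi> c"
proof -
  let ?T = "fst c + snd c"
  have T: "?T \<le> d 1 + d 2" using assms(2) by (auto simp: grid_def)
  have included: "unary_pair c (s t) (stair2 s t) = of_bool (t \<le> ?T)" if t: "t \<in> {1..d 1 + d 2}" for t
  proof -
    obtain u where u: "t = Suc u" using t by (cases t) auto
    have i: "s t \<in> {1,2}" using staircase_dir[OF assms(1) t] .
    have "coord (jpt s t) (s t) \<le> coord c (s t)" if "t \<le> ?T"
      using coord_jpt_mono[OF that, of s "s t"] assms(3) by simp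
    moreover have "coord c (s t) < coord (jpt s t) (s t)" if "\<not> t \<le> ?T"
      using coord_jpt_mono[of ?T u s "s t"] coord_jpt_Suc[of s u "s t"] i u that assms(3) by simp
    ultimately show ?thesis
      using stair2_eq_coord[OF assms(1) t] by (cases "t \<le> ?T") (auto simp: unary_pair_def unary_def)
  qed
  have "stair_rhs \<psi> d s (unary_pair c)
      = \<psi> (jpt s 0) + (\<Sum>t\<in>{1..d 1 + d 2}. of_bool (t \<le> ?T) * (\<psi> (jpt s t) - \<psi> (jpt s (t - 1))))"
    by (simp add: stair_rhs_def included mult.commute)
  also have "\<dots> = \<psi> (jpt s 0) + (\<Sum>t\<in>{Suc 0..?T}. \<psi> (jpt s t) - \<psi> (jpt s (t - 1)))"
    using T by (intro arg_cong2[where f="(+)"] sum.mono_neutral_cong_right) auto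
  also have "\<dots> = \<psi> c" using sum_telescope''[of 0 ?T "\<lambda>t. \<psi> (jpt s t)"] assms(3) by simp
  finally show ?thesis .
qed

lemma staircase_through:
  assumes "c \<in> grid d"
  obtains s where "is_staircase d s" "jpt s (fst c + snd c) = c"
proof -
  obtain a b where c: "c = (a, b)" by (cases c)
  define s where "s t = (if t \<le> a \<or> a + d 2 < t then 1 else 2 :: nat)" for t
  have jpt: "jpt s t =
      (if t \<le> a then (t, 0) else if t \<le> a + d 2 then (a, t - a) else (t - d 2, d 2))" for t
    by (induction t) (auto simp: s_def split_def Let_def)
  have "is_staircase d s"
    using assms c by (intro is_staircaseI) (auto simp: jpt s_def grid_def)
  moreover have "jpt s (fst c + snd c) = c" using assms c by (simp add: jpt grid_def)
  ultimately show ?thesis using that by blast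
qed

section \<open>Sorting staircases and summation by parts\<close>

(* The coordinates of zz read along the staircase, preceded by 1 and followed by 0; when they
   decrease, their decrements are convex weights of the lattice points jpt s t. *)
definition stair_values :: "(nat \<Rightarrow> nat) \<Rightarrow> (nat \<Rightarrow> nat) \<Rightarrow> (nat \<Rightarrow> nat \<Rightarrow> real) \<Rightarrow> nat \<Rightarrow> real" where
  "stair_values d s zz t = (if t = 0 then 1 else if t \<le> d 1 + d 2 then zz (s t) (stair2 s t) else 0)"

definition stair_weight :: "(nat \<Rightarrow> nat) \<Rightarrow> (nat \<Rightarrow> nat) \<Rightarrow> (nat \<Rightarrow> nat \<Rightarrow> real) \<Rightarrow> nat \<Rightarrow> real" where
  "stair_weight d s zz t = stair_values d s zz t - stair_values d s zz (Suc t)"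

definition staircase_sorts :: "(nat \<Rightarrow> nat) \<Rightarrow> (nat \<Rightarrow> nat) \<Rightarrow> (nat \<Rightarrow> nat \<Rightarrow> real) \<Rightarrow> bool" where
  "staircase_sorts d s zz \<longleftrightarrow> (\<forall>t\<le>d 1 + d 2. stair_values d s zz (Suc t) \<le> stair_values d s zz t)"

lemma stair_weight_nonneg: "staircase_sorts d s zz \<Longrightarrow> t \<le> d 1 + d 2 \<Longrightarrow> 0 \<le> stair_weight d s zz t"
  by (simp add: staircase_sorts_def stair_weight_def)

lemma sum_stair_weight: "(\<Sum>t\<in>{0..d 1 + d 2}. stair_weight d s zz t) = 1"
  using sum_telescope[of "stair_values d s zz" "d 1 + d 2"]
  by (simp add: stair_weight_def atLeast0AtMost stair_values_def)

lemma summation_by_parts: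
  fixes v g :: "nat \<Rightarrow> real"
  shows "(\<Sum>t\<in>{0..n}. (v t - v (Suc t)) * g t)
    = v 0 * g 0 - v (Suc n) * g n + (\<Sum>t\<in>{1..n}. (g t - g (t - 1)) * v t)"
  by (induction n) (auto simp: sum.cl_ivl_Suc algebra_simps)

lemma sum_stair_weight_mult:
  "(\<Sum>t\<in>{0..d 1 + d 2}. stair_weight d s zz t * g t)
    = g 0 + (\<Sum>t\<in>{1..d 1 + d 2}. (g t - g (t - 1)) * zz (s t) (stair2 s t))"
  unfolding stair_weight_def summation_by_parts by (simp add: stair_values_def)

lemma sum_stair_weight_psi:
  "(\<Sum>t\<in>{0..d 1 + d 2}. stair_weight d s zz t * \<psi> (jpt s t)) = stair_rhs \<psi> d s zz"
  using sum_stair_weight_mult[of d s zz "\<lambda>t. \<psi> (jpt s t)"] by (simp add: stair_rhs_def)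

lemma sum_stair_weight_unary_pair:
  assumes "is_staircase d s" "i \<in> {1,2}" "k \<in> {1..d i}"
  shows "(\<Sum>t\<in>{0..d 1 + d 2}. stair_weight d s zz t * unary_pair (jpt s t) i k) = zz i k"
proof -
  let ?g = "\<lambda>t. unary_pair (jpt s t) i k"
  \<comment> \<open>The indicator jumps only at the step where coordinate i reaches k, and there the staircase
    reads zz i k.\<close>
  have jump: "(?g t - ?g (t - 1)) * zz (s t) (stair2 s t) = (?g t - ?g (t - 1)) * zz i k"
    if t: "t \<in> {1..d 1 + d 2}" for t
  proof -
    obtain u where u: "t = Suc u" using t by (cases t) auto
    have step: "coord (jpt s t) i = coord (jpt s u) i + of_bool (s t = i)"
      using coord_jpt_Suc[of s u i] staircase_dir[OF assms(1) t] assms(2) u by simp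
    show ?thesis
    proof (cases "s t = i \<and> ?g t \<noteq> ?g (t - 1)")
      case True
      then have "stair2 s t = k"
        using stair2_eq_coord[OF assms(1) t] step u
        by (auto simp: unary_pair_def unary_def split: if_splits)
      then show ?thesis using True by simp
    next
      case False
      then show ?thesis using step u by (auto simp: unary_pair_def)
    qed
  qed
  have ends: "?g (d 1 + d 2) = 1" "?g 0 = 0"
    using jpt_final[OF assms(1)] assms(2,3) by (auto simp: unary_pair_def unary_def coord_def)
  have "(\<Sum>t\<in>{0..d 1 + d 2}. stair_weight d s zz t * ?g t)
      = ?g 0 + (\<Sum>t\<in>{1..d 1 + d 2}. (?g t - ?g (t - 1)) * zz (s t) (stair2 s t))"
    by (rule sum_stair_weight_mult)
  also have "\<dots> = ?g 0 + (\<Sum>t\<in>{1..d 1 + d 2}. (?g t - ?g (t - 1)) * zz i k)"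
    by (rule arg_cong[where f="\<lambda>x. ?g 0 + x"], rule sum.cong[OF refl], rule jump)
  also have "\<dots> = (\<Sum>t\<in>{Suc 0..d 1 + d 2}. ?g t - ?g (t - 1)) * zz i k"
    using ends(2) by (simp add: sum_distrib_right)
  also have "\<dots> = zz i k"
    using sum_telescope''[of 0 "d 1 + d 2" ?g] ends by simp
  finally show ?thesis .
qed

lemma stair_values_bounds:
  assumes "is_staircase d s" "in_Delta (d 1) (zz 1)" "in_Delta (d 2) (zz 2)"
  shows "0 \<le> stair_values d s zz t" "stair_values d s zz t \<le> 1"
proof -
  have "0 \<le> zz (s t) (stair2 s t) \<and> zz (s t) (stair2 s t) \<le> 1" if t: "t \<in> {1..d 1 + d 2}"
    using staircase_dir[OF assms(1) t] stair2_range[OF assms(1) t] in_Delta_bounds assms(2,3)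
    by fastforce
  then show "0 \<le> stair_values d s zz t" "stair_values d s zz t \<le> 1"
    by (auto simp: stair_values_def)
qed

(* Greedy merge of the nonincreasing sequences zz 1 and zz 2: always step towards the larger next
   entry. *)
definition merge_fst :: "(nat \<Rightarrow> nat) \<Rightarrow> (nat \<Rightarrow> nat \<Rightarrow> real) \<Rightarrow> nat \<times> nat \<Rightarrow> bool" where
  "merge_fst d zz c \<longleftrightarrow> d 2 \<le> snd c \<or> (fst c < d 1 \<and> zz 2 (snd c + 1) \<le> zz 1 (fst c + 1))"

fun merge_path :: "(nat \<Rightarrow> nat) \<Rightarrow> (nat \<Rightarrow> nat \<Rightarrow> real) \<Rightarrow> nat \<Rightarrow> nat \<times> nat" where
  "merge_path d zz 0 = (0, 0)"
| "merge_path d zz (Suc t) = (let c = merge_path d zz t in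
     if merge_fst d zz c then (fst c + 1, snd c) else (fst c, snd c + 1))"

definition merge_staircase :: "(nat \<Rightarrow> nat) \<Rightarrow> (nat \<Rightarrow> nat \<Rightarrow> real) \<Rightarrow> nat \<Rightarrow> nat" where
  "merge_staircase d zz t = (if merge_fst d zz (merge_path d zz (t - 1)) then 1 else 2)"

lemma jpt_merge_staircase: "jpt (merge_staircase d zz) t = merge_path d zz t"
  by (induction t) (simp_all add: merge_staircase_def split_def Let_def)

lemma merge_path_in_grid:
  "t \<le> d 1 + d 2 \<Longrightarrow> fst (merge_path d zz t) + snd (merge_path d zz t) = t \<and> merge_path d zz t \<in> grid d"
  by (induction t) (auto simp: Let_def merge_fst_def grid_def)

lemma is_staircase_merge: "is_staircase d (merge_staircase d zz)"
proof (rule is_staircaseI)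
  show "jpt (merge_staircase d zz) (d 1 + d 2) = (d 1, d 2)"
    using merge_path_in_grid[of "d 1 + d 2" d zz]
    by (simp add: jpt_merge_staircase grid_def prod_eq_iff mem_Times_iff)
qed (simp add: merge_staircase_def)

lemma stair_values_merge:
  assumes "t \<in> {1..d 1 + d 2}"
  shows "stair_values d (merge_staircase d zz) zz t
    = (let c = merge_path d zz (t - 1) in
       if merge_fst d zz c then zz 1 (fst c + 1) else zz 2 (snd c + 1))"
proof -
  obtain u where u: "t = Suc u" using assms by (cases t) auto
  obtain a b where c: "merge_path d zz u = (a, b)" by (cases "merge_path d zz u")
  show ?thesis
    using stair2_eq_coord[OF is_staircase_merge assms, unfolded jpt_merge_staircase] assms u c
    by (simp add: stair_values_def merge_staircase_def coord_def)
qed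

lemma merge_staircase_sorts:
  assumes "in_Delta (d 1) (zz 1)" "in_Delta (d 2) (zz 2)"
  shows "staircase_sorts d (merge_staircase d zz) zz"
  unfolding staircase_sorts_def
proof (intro allI impI)
  fix t assume t: "t \<le> d 1 + d 2"
  let ?V = "stair_values d (merge_staircase d zz) zz"
  note bounds = stair_values_bounds[OF is_staircase_merge assms]
  consider "t = 0" | "t = d 1 + d 2" | "1 \<le> t" "t < d 1 + d 2" using t by linarith
  then show "?V (Suc t) \<le> ?V t"
  proof cases
    case 1 then show ?thesis using bounds(2)[where t=1] by (simp add: stair_values_def)
  next
    case 2 then show ?thesis using bounds(1)[where t=t] by (simp add: stair_values_def)
  next
    case 3
    then obtain u where u: "t = Suc u" by (cases t) auto
    obtain a b where c: "merge_path d zz u = (a, b)" by (cases "merge_path d zz u")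
    have valid: "merge_path d zz (Suc t) \<in> grid d" using merge_path_in_grid[of "Suc t" d zz] 3 by simp
    have V: "?V t = (if merge_fst d zz (a, b) then zz 1 (a + 1) else zz 2 (b + 1))"
      using stair_values_merge[of t d zz] 3 u c by simp
    show ?thesis
    proof (cases "merge_fst d zz (a, b)")
      case True
      then have step: "merge_path d zz t = (a + 1, b)" using u c by simp
      have "?V (Suc t) = (if merge_fst d zz (a + 1, b) then zz 1 (a + 2) else zz 2 (b + 1))"
        using stair_values_merge[of "Suc t" d zz] 3 step by simp
      then show ?thesis
        using V True valid step in_Delta_antimono[OF assms(1), of "a + 1" "a + 2"]
        by (auto simp: merge_fst_def grid_def)
    next
      case False
      then have step: "merge_path d zz t = (a, b + 1)" using u c by simp
      have "?V (Suc t) = (if merge_fst d zz (a, b + 1) then zz 1 (a + 1) else zz 2 (b + 2))"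
        using stair_values_merge[of "Suc t" d zz] 3 step by simp
      then show ?thesis
        using V False valid step in_Delta_antimono[OF assms(2), of "b + 1" "b + 2"]
        by (auto simp: merge_fst_def grid_def)
    qed
  qed
qed

section \<open>Convex combinations of points\<close>

definition point_sum :: "'a set \<Rightarrow> ('a \<Rightarrow> real) \<Rightarrow> ('a \<Rightarrow> point) \<Rightarrow> point" where
  "point_sum A w P = ((\<lambda>i. \<Sum>t\<in>A. w t * fst (P t) i), (\<lambda>i j. \<Sum>t\<in>A. w t * fst (snd (P t)) i j),
     \<Sum>t\<in>A. w t * snd (snd (P t)))"

definition comb_convex :: "point set \<Rightarrow> bool" where
  "comb_convex Q \<longleftrightarrow> (\<forall>a\<in>Q. \<forall>b\<in>Q. \<forall>\<theta>. 0 \<le> \<theta> \<and> \<theta> \<le> 1 \<longrightarrow> comb \<theta> a b \<in> Q)"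

lemma comb_self: "comb \<theta> a a = a"
  by (simp add: comb_def algebra_simps)

lemma point_sum_insert_cases:
  assumes "finite A" "k \<notin> A" "\<forall>t\<in>insert k A. 0 \<le> w t" "sum w (insert k A) = 1"
  obtains "point_sum (insert k A) w P = P k"
  | w' where "\<forall>t\<in>A. 0 \<le> w' t" "sum w' A = 1" "0 \<le> w k" "w k < 1"
      "point_sum (insert k A) w P = comb (w k) (P k) (point_sum A w' P)"
proof (cases "w k = 1")
  case True
  then have "\<forall>t\<in>A. w t = 0" using assms sum_nonneg_eq_0_iff[of A w] by simp
  then have "point_sum (insert k A) w P = P k" using assms(1,2) True by (simp add: point_sum_def)
  then show ?thesis using that(1) by blast
next
  case False
  have "sum w A = 1 - w k" using assms by simp
  moreover have "0 \<le> sum w A" using assms(3) by (simp add: sum_nonneg)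
  ultimately have wk: "0 \<le> w k" "w k < 1" using False assms(3) by auto
  define w' where "w' t = w t / (1 - w k)" for t
  have "\<forall>t\<in>A. 0 \<le> w' t" "sum w' A = 1"
    using assms(3) wk \<open>sum w A = 1 - w k\<close> by (auto simp: w'_def sum_divide_distrib[symmetric])
  moreover have "(1 - w k) * (\<Sum>t\<in>A. w' t * g t) = (\<Sum>t\<in>A. w t * g t)" for g :: "'a \<Rightarrow> real"
    using wk by (simp add: w'_def sum_distrib_left)
  then have "point_sum (insert k A) w P = comb (w k) (P k) (point_sum A w' P)"
    using assms(1,2) by (simp add: point_sum_def comb_def)
  ultimately show ?thesis using that(2) wk by blast
qed

lemma point_sum_mem:
  assumes "comb_convex Q" "finite A" "\<forall>t\<in>A. 0 \<le> w t" "sum w A = 1" "P ` A \<subseteq> Q"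
  shows "point_sum A w P \<in> Q"
  using assms(2-)
proof (induction A arbitrary: w rule: finite_induct)
  case (insert k A)
  show ?case
    by (cases rule: point_sum_insert_cases[OF insert.hyps insert.prems(1,2), of P])
      (use assms(1) insert in \<open>auto simp: comb_convex_def\<close>)
qed simp

lemma is_vertex_comb:
  assumes "is_vertex v Q" "a \<in> Q" "b \<in> Q" "0 \<le> \<theta>" "\<theta> \<le> 1" "v = comb \<theta> a b"
  shows "v = a \<or> v = b"
proof -
  consider "a = b" | "\<theta> = 0" | "\<theta> = 1" | "a \<noteq> b" "0 < \<theta>" "\<theta> < 1" using assms(4,5) by linarith
  then show ?thesis
  proof cases
    case 1 then show ?thesis using assms(6) by (simp add: comb_self)
  next
    case 2 then show ?thesis using assms(6) by (simp add: comb_def)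
  next
    case 3 then show ?thesis using assms(6) by (simp add: comb_def)
  next
    case 4 then show ?thesis using assms(1-3,6) by (auto simp: is_vertex_def)
  qed
qed

lemma is_vertex_point_sum:
  assumes "comb_convex Q" "is_vertex v Q" "finite A" "\<forall>t\<in>A. 0 \<le> w t" "sum w A = 1" "P ` A \<subseteq> Q"
    and "v = point_sum A w P"
  shows "\<exists>t\<in>A. v = P t"
  using assms(3-)
proof (induction A arbitrary: w rule: finite_induct)
  case (insert k A)
  show ?case
  proof (cases rule: point_sum_insert_cases[OF insert.hyps insert.prems(1,2), of P])
    case (2 w')
    then have "point_sum A w' P \<in> Q" using point_sum_mem[OF assms(1) insert(1)] insert.prems by auto
    then have "v = P k \<or> v = point_sum A w' P"
      using is_vertex_comb[OF assms(2)] 2 insert.prems by auto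
    then show ?thesis using insert.IH[of w'] 2 insert.prems by auto
  qed (use insert.prems in simp)
qed simp

section \<open>The staircase formulation\<close>

definition perm_pair :: "(nat \<Rightarrow> nat \<Rightarrow> nat) \<Rightarrow> nat \<times> nat \<Rightarrow> nat \<times> nat" where
  "perm_pair \<rho> c = (\<rho> 1 (fst c), \<rho> 2 (snd c))"

lemma coord_perm_pair: "i \<in> {1,2} \<Longrightarrow> coord (perm_pair \<rho> c) i = \<rho> i (coord c i)"
  by (auto simp: coord_def perm_pair_def)

lemma perm_pair_in_grid:
  assumes "\<forall>i\<in>{1,2}. \<rho> i permutes {0..d i}" "c \<in> grid d"
  shows "perm_pair \<rho> c \<in> grid d"
  using assms permutes_in_image[of "\<rho> 1" "{0..d 1}"] permutes_in_image[of "\<rho> 2" "{0..d 2}"]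
  by (auto simp: grid_def perm_pair_def)

lemma permutes_pair_inverses:
  fixes \<rho> :: "nat \<Rightarrow> nat \<Rightarrow> nat"
  assumes "\<forall>i\<in>{1,2}. \<rho> i permutes {0..d i}" "i \<in> {1,2}"
  shows "\<rho> i (inv (\<rho> i) a) = a"
proof -
  have "\<rho> i permutes {0..d i}" using assms by auto
  then show ?thesis by (rule permutes_inverses(1))
qed

lemma psi_perm_pair_inv:
  assumes "\<forall>i\<in>{1,2}. \<rho> i permutes {0..d i}"
  shows "psi f p \<rho> (perm_pair (\<lambda>i. inv (\<rho> i)) c) = f 1 (p 1 (fst c)) * f 2 (p 2 (snd c))"
  by (simp add: psi_def perm_pair_def permutes_pair_inverses[OF assms])

lemma unary_pair_eq_Lmap:
  assumes "\<forall>i\<in>{1,2}. \<rho> i permutes {0..d i}" "c \<in> grid d" "i \<in> {1,2}"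
  shows "unary_pair c i j = Lmap (d i) (\<rho> i) (unary_pair (perm_pair (\<lambda>i. inv (\<rho> i)) c) i) j"
proof -
  have perm: "\<rho> i permutes {0..d i}" using assms(1,3) by auto
  have "inv (\<rho> i) (coord c i) \<le> d i"
    using permutes_in_image[OF permutes_inv[OF perm]] assms(2,3) by (auto simp: mem_grid_coord)
  then have "Lmap (d i) (\<rho> i) (unary (inv (\<rho> i) (coord c i))) j = unary (coord c i) j"
    using Lmap_unary[OF perm] permutes_inverses(1)[OF perm] by simp
  then show ?thesis by (simp add: unary_pair_def coord_perm_pair[OF assms(3)])
qed

definition grid_point ::
    "(nat \<Rightarrow> nat) \<Rightarrow> (nat \<Rightarrow> nat \<Rightarrow> real) \<Rightarrow> (nat \<Rightarrow> real \<Rightarrow> real) \<Rightarrow> nat \<times> nat \<Rightarrow> point"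
  where "grid_point d p f c =
    ((\<lambda>i. if i \<in> {1,2} then p i (coord c i) else 0),
     (\<lambda>i j. if i \<in> {1,2} \<and> j \<in> {1..d i} then unary_pair c i j else 0),
     f 1 (p 1 (fst c)) * f 2 (p 2 (snd c)))"

lemma binary_z_grid_point: "binary_z d (grid_point d p f c)"
  by (simp add: binary_z_def grid_point_def unary_pair_def unary_def)

lemma Sset_eq_grid_points: "Sset d p f = proj_xmu ` grid_point d p f ` grid d"
proof (intro equalityI subsetI)
  fix y assume "y \<in> Sset d p f"
  then obtain x \<mu> a b where y: "y = (x, \<mu>)" "\<forall>i. i \<notin> {1,2} \<longrightarrow> x i = 0" "\<mu> = f 1 (x 1) * f 2 (x 2)"
    "a \<le> d 1" "x 1 = p 1 a" "b \<le> d 2" "x 2 = p 2 b"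
    by (auto simp: Sset_def)
  then have "y = proj_xmu (grid_point d p f (a, b))"
    by (auto simp: proj_xmu_def grid_point_def coord_def)
  then show "y \<in> proj_xmu ` grid_point d p f ` grid d" using y by (auto simp: grid_def)
next
  fix y assume "y \<in> proj_xmu ` grid_point d p f ` grid d"
  then obtain a b where "a \<le> d 1" "b \<le> d 2" "y = proj_xmu (grid_point d p f (a, b))"
    by (auto simp: grid_def)
  then show "y \<in> Sset d p f" by (auto simp: Sset_def proj_xmu_def grid_point_def coord_def)
qed

lemma grid_point_eqI:
  assumes "\<forall>i. i \<notin> {1,2} \<longrightarrow> x i = 0" "\<forall>i j. \<not> (i \<in> {1,2} \<and> j \<in> {1..d i}) \<longrightarrow> z i j = 0"
    "\<forall>i\<in>{1,2}. x i = p i (coord c i)" "\<forall>i\<in>{1,2}. \<forall>j\<in>{1..d i}. z i j = unary_pair c i j"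
    "\<mu> = f 1 (p 1 (fst c)) * f 2 (p 2 (snd c))"
  shows "(x, z, \<mu>) = grid_point d p f c"
proof -
  have "x i = fst (grid_point d p f c) i" for i
    using assms(1) assms(3)[rule_format, of i] by (cases "i \<in> {1,2}") (simp_all add: grid_point_def)
  moreover have "z i j = fst (snd (grid_point d p f c)) i j" for i j
  proof (cases "i \<in> {1,2} \<and> j \<in> {1..d i}")
    case True
    then show ?thesis using assms(4)[rule_format, of i j] by (simp add: grid_point_def)
  next
    case False
    then show ?thesis using assms(2) by (auto simp: grid_point_def)
  qed
  ultimately show ?thesis using assms(5) by (simp add: grid_point_def fun_eq_iff)
qed

lemma binary_in_B_grid:
  assumes B: "\<forall>i\<in>{1,2}. in_B (d i) (p i) (x i) (z i)" and bin: "\<forall>i\<in>{1,2}. \<forall>j\<in>{1..d i}. z i j \<in> {0, 1}"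
  obtains c where "c \<in> grid d" "\<forall>i\<in>{1,2}. x i = p i (coord c i)"
    "\<forall>i\<in>{1,2}. \<forall>j\<in>{1..d i}. z i j = unary_pair c i j"
proof -
  have "\<exists>a\<le>d i. \<forall>j\<in>{1..d i}. z i j = unary a j" if i: "i \<in> {1,2}" for i
  proof -
    have "in_Delta (d i) (z i)" using B[rule_format, OF i] by (simp add: in_B_def)
    from binary_in_Delta_unary[OF this bspec[OF bin i]] show ?thesis by blast
  qed
  from this[of 1] this[of 2] obtain a b where a: "a \<le> d 1" "\<forall>j\<in>{1..d 1}. z 1 j = unary a j"
    and b: "b \<le> d 2" "\<forall>j\<in>{1..d 2}. z 2 j = unary b j" by auto
  have z: "\<forall>i\<in>{1,2}. \<forall>j\<in>{1..d i}. z i j = unary_pair (a, b) i j"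
    using a b by (simp add: unary_pair_def coord_def)
  have "x i = p i (coord (a, b) i)" if i: "i \<in> {1,2}" for i
  proof -
    have "coord (a, b) i \<le> d i" using a b i by (auto simp: coord_def)
    moreover have "\<forall>j\<in>{1..d i}. z i j = unary (coord (a, b) i) j"
      using z[rule_format, OF i] by (simp add: unary_pair_def)
    ultimately show ?thesis using in_B_unary_iff B[rule_format, OF i] by blast
  qed
  moreover have "(a, b) \<in> grid d" using a b by (simp add: grid_def)
  ultimately show ?thesis using that z by blast
qed

lemma mem_QsetE:
  assumes "(x, z, \<mu>) \<in> Qset d p f \<sigma> \<tau>"
  obtains z' z'' where "\<forall>i. i \<notin> {1,2} \<longrightarrow> x i = 0" "\<forall>i j. \<not> (i \<in> {1,2} \<and> j \<in> {1..d i}) \<longrightarrow> z i j = 0"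
    "\<forall>i\<in>{1,2}. in_B (d i) (p i) (x i) (z i)"
    "\<forall>i\<in>{1,2}. \<forall>j\<in>{1..d i}. z i j = Lmap (d i) (\<sigma> i) (z' i) j"
    "\<forall>i\<in>{1,2}. \<forall>j\<in>{1..d i}. z i j = Lmap (d i) (\<tau> i) (z'' i) j"
    "\<forall>s. is_staircase d s \<longrightarrow> \<mu> \<le> stair_rhs (psi f p \<sigma>) d s z'"
    "\<forall>s. is_staircase d s \<longrightarrow> stair_rhs (psi f p \<tau>) d s z'' \<le> \<mu>"
proof -
  note Q = assms[unfolded Qset_def mem_Collect_eq prod.case]
  from Q obtain z' z'' where L: "\<forall>i\<in>{1,2}. \<forall>j\<in>{1..d i}. z i j = Lmap (d i) (\<sigma> i) (z' i) j"
    "\<forall>i\<in>{1,2}. \<forall>j\<in>{1..d i}. z i j = Lmap (d i) (\<tau> i) (z'' i) j"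
    and S: "\<forall>s. is_staircase d s \<longrightarrow> \<mu> \<le> stair_rhs (psi f p \<sigma>) d s z' \<and> stair_rhs (psi f p \<tau>) d s z'' \<le> \<mu>"
    by (elim conjE exE)
  have "\<forall>s. is_staircase d s \<longrightarrow> \<mu> \<le> stair_rhs (psi f p \<sigma>) d s z'"
    "\<forall>s. is_staircase d s \<longrightarrow> stair_rhs (psi f p \<tau>) d s z'' \<le> \<mu>" using S by simp_all
  moreover have "\<forall>i. i \<notin> {1,2} \<longrightarrow> x i = 0" "\<forall>i j. \<not> (i \<in> {1,2} \<and> j \<in> {1..d i}) \<longrightarrow> z i j = 0"
    "\<forall>i\<in>{1,2}. in_B (d i) (p i) (x i) (z i)" using Q by simp_all
  ultimately show ?thesis using L by (intro that[of z' z''])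
qed

lemma mem_QsetI:
  assumes "\<forall>i. i \<notin> {1,2} \<longrightarrow> x i = 0" "\<forall>i j. \<not> (i \<in> {1,2} \<and> j \<in> {1..d i}) \<longrightarrow> z i j = 0"
    "\<forall>i\<in>{1,2}. in_B (d i) (p i) (x i) (z i)"
    "\<forall>i\<in>{1,2}. \<forall>j\<in>{1..d i}. z i j = Lmap (d i) (\<sigma> i) (z' i) j"
    "\<forall>i\<in>{1,2}. \<forall>j\<in>{1..d i}. z i j = Lmap (d i) (\<tau> i) (z'' i) j"
    "\<forall>s. is_staircase d s \<longrightarrow> \<mu> \<le> stair_rhs (psi f p \<sigma>) d s z'"
    "\<forall>s. is_staircase d s \<longrightarrow> stair_rhs (psi f p \<tau>) d s z'' \<le> \<mu>"
  shows "(x, z, \<mu>) \<in> Qset d p f \<sigma> \<tau>"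
  unfolding Qset_def mem_Collect_eq prod.case
  by (intro conjI exI[of _ z'] exI[of _ z''] allI impI) (use assms in auto)

lemma Qset_comb_convex:
  assumes \<sigma>: "\<forall>i\<in>{1,2}. \<sigma> i permutes {0..d i}" and \<tau>: "\<forall>i\<in>{1,2}. \<tau> i permutes {0..d i}"
  shows "comb_convex (Qset d p f \<sigma> \<tau>)"
  unfolding comb_convex_def
proof (intro ballI allI impI)
  fix a b and \<theta> :: real
  assume a: "a \<in> Qset d p f \<sigma> \<tau>" and b: "b \<in> Qset d p f \<sigma> \<tau>" and \<theta>: "0 \<le> \<theta> \<and> \<theta> \<le> 1"
  obtain xa za \<mu>a xb zb \<mu>b where ab: "a = (xa, za, \<mu>a)" "b = (xb, zb, \<mu>b)" by (cases a, cases b)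
  from a[unfolded ab] show "comb \<theta> a b \<in> Qset d p f \<sigma> \<tau>"
  proof (cases rule: mem_QsetE)
    case A: (1 za' za'')
    from b[unfolded ab] show ?thesis
    proof (cases rule: mem_QsetE)
      case B: (1 zb' zb'')
      let ?c = "\<lambda>u v. \<theta> * u + (1 - \<theta>) * (v :: real)"
      have "\<forall>i. i \<notin> {1,2} \<longrightarrow> ?c (xa i) (xb i) = 0"
        "\<forall>i j. \<not> (i \<in> {1,2} \<and> j \<in> {1..d i}) \<longrightarrow> ?c (za i j) (zb i j) = 0"
        using A(1,2) B(1,2) by simp_all
      moreover have "\<forall>i\<in>{1,2}. in_B (d i) (p i) (?c (xa i) (xb i)) (\<lambda>j. ?c (za i j) (zb i j))"
        using in_B_comb A(3) B(3) \<theta> by blast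
      moreover have
        "\<forall>i\<in>{1,2}. \<forall>j\<in>{1..d i}. ?c (za i j) (zb i j) = Lmap (d i) (\<sigma> i) (\<lambda>j. ?c (za' i j) (zb' i j)) j"
        "\<forall>i\<in>{1,2}. \<forall>j\<in>{1..d i}. ?c (za i j) (zb i j) = Lmap (d i) (\<tau> i) (\<lambda>j. ?c (za'' i j) (zb'' i j)) j"
        using Lmap_comb \<sigma> \<tau> A(4,5) B(4,5) by simp_all
      moreover have "?c \<mu>a \<mu>b \<le> stair_rhs (psi f p \<sigma>) d s (\<lambda>i j. ?c (za' i j) (zb' i j))"
        "stair_rhs (psi f p \<tau>) d s (\<lambda>i j. ?c (za'' i j) (zb'' i j)) \<le> ?c \<mu>a \<mu>b"
        if "is_staircase d s" for s
        unfolding stair_rhs_comb using that A(6,7) B(6,7) \<theta> by (auto intro!: add_mono mult_left_mono)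
      ultimately have "(\<lambda>i. ?c (xa i) (xb i), \<lambda>i j. ?c (za i j) (zb i j), ?c \<mu>a \<mu>b) \<in> Qset d p f \<sigma> \<tau>"
        by (intro mem_QsetI[where z' = "\<lambda>i j. ?c (za' i j) (zb' i j)"
              and z'' = "\<lambda>i j. ?c (za'' i j) (zb'' i j)"]) auto
      moreover have "comb \<theta> a b = (\<lambda>i. ?c (xa i) (xb i), \<lambda>i j. ?c (za i j) (zb i j), ?c \<mu>a \<mu>b)"
        by (simp add: ab comb_def)
      ultimately show "comb \<theta> a b \<in> Qset d p f \<sigma> \<tau>" by (simp only:)
    qed
  qed
qed

lemma sum_stair_weight_unary_perm:
  assumes "\<rho> permutes {0..d i}" "i \<in> {1,2}" "is_staircase d s" "j \<in> {1..d i}"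
  shows "(\<Sum>t\<in>{0..d 1 + d 2}. stair_weight d s zz t * unary (\<rho> (coord (jpt s t) i)) j)
    = Lmap (d i) \<rho> (zz i) j"
proof -
  have "coord (jpt s t) i \<le> d i" if "t \<in> {0..d 1 + d 2}" for t
    using jpt_in_grid[OF assms(3)] that assms(2) by (auto simp: mem_grid_coord)
  then have "(\<Sum>t\<in>{0..d 1 + d 2}. stair_weight d s zz t * unary (\<rho> (coord (jpt s t) i)) j)
      = (\<Sum>t\<in>{0..d 1 + d 2}. stair_weight d s zz t * Lmap (d i) \<rho> (unary (coord (jpt s t) i)) j)"
    using Lmap_unary[OF assms(1)] by simp
  also have "\<dots> = Lmap (d i) \<rho> (zz i) j"
    using sum_stair_weight_unary_pair[OF assms(3,2)] sum_stair_weight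
    by (intro Lmap_affine[OF assms(1), symmetric]) (auto simp: unary_pair_def)
  finally show ?thesis .
qed

lemma sum_stair_weight_breakpoint:
  fixes q :: "nat \<Rightarrow> real"
  assumes "\<rho> permutes {0..d i}" "i \<in> {1,2}" "is_staircase d s"
  shows "(\<Sum>t\<in>{0..d 1 + d 2}. stair_weight d s zz t * q (\<rho> (coord (jpt s t) i)))
    = q 0 + (\<Sum>j\<in>{1..d i}. (q j - q (j - 1)) * Lmap (d i) \<rho> (zz i) j)"
proof -
  let ?w = "stair_weight d s zz" and ?u = "\<lambda>t. unary (\<rho> (coord (jpt s t) i))"
  have "\<rho> (coord (jpt s t) i) \<le> d i" if "t \<in> {0..d 1 + d 2}" for t
    using jpt_in_grid[OF assms(3)] permutes_in_image[OF assms(1)] that assms(2)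
    by (auto simp: mem_grid_coord)
  then have "(\<Sum>t\<in>{0..d 1 + d 2}. ?w t * q (\<rho> (coord (jpt s t) i)))
      = (\<Sum>t\<in>{0..d 1 + d 2}. ?w t * (q 0 + (\<Sum>j\<in>{1..d i}. (q j - q (j - 1)) * ?u t j)))"
    using breakpoint_unary by simp
  also have "\<dots> = (\<Sum>t\<in>{0..d 1 + d 2}. ?w t) * q 0
      + (\<Sum>j\<in>{1..d i}. (q j - q (j - 1)) * (\<Sum>t\<in>{0..d 1 + d 2}. ?w t * ?u t j))"
    by (simp add: distrib_left sum.distrib sum_distrib_left sum_distrib_right mult_ac) (rule sum.swap)
  also have "\<dots> = q 0 + (\<Sum>j\<in>{1..d i}. (q j - q (j - 1)) * Lmap (d i) \<rho> (zz i) j)"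
    using sum_stair_weight[of d s zz] sum_stair_weight_unary_perm[OF assms] by simp
  finally show ?thesis .
qed

lemma point_sum_staircase:
  assumes \<rho>: "\<forall>i\<in>{1,2}. \<rho> i permutes {0..d i}"
    and x0: "\<forall>i. i \<notin> {1,2} \<longrightarrow> x i = 0" and z0: "\<forall>i j. \<not> (i \<in> {1,2} \<and> j \<in> {1..d i}) \<longrightarrow> z i j = 0"
    and B: "\<forall>i\<in>{1,2}. in_B (d i) (p i) (x i) (z i)"
    and L: "\<forall>i\<in>{1,2}. \<forall>j\<in>{1..d i}. z i j = Lmap (d i) (\<rho> i) (zz i) j"
    and s: "is_staircase d s"
  shows "point_sum {0..d 1 + d 2} (stair_weight d s zz) (\<lambda>t. grid_point d p f (perm_pair \<rho> (jpt s t)))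
    = (x, z, stair_rhs (psi f p \<rho>) d s zz)"
proof -
  let ?w = "stair_weight d s zz" and ?P = "\<lambda>t. grid_point d p f (perm_pair \<rho> (jpt s t))"
  have z: "(\<Sum>t\<in>{0..d 1 + d 2}. ?w t * fst (snd (?P t)) i j) = z i j" for i j
  proof (cases "i \<in> {1,2} \<and> j \<in> {1..d i}")
    case True
    then have "\<rho> i permutes {0..d i}" "z i j = Lmap (d i) (\<rho> i) (zz i) j" using \<rho> L by auto
    with sum_stair_weight_unary_perm[OF this(1) _ s, of j zz] True
    show ?thesis by (simp add: grid_point_def unary_pair_def coord_perm_pair)
  next
    case False
    then show ?thesis using z0 by (auto simp: grid_point_def)
  qed
  have x: "(\<Sum>t\<in>{0..d 1 + d 2}. ?w t * fst (?P t) i) = x i" for i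
  proof (cases "i \<in> {1,2}")
    case True
    then have perm: "\<rho> i permutes {0..d i}" using \<rho> by auto
    have "(\<Sum>j\<in>{1..d i}. (p i j - p i (j - 1)) * Lmap (d i) (\<rho> i) (zz i) j)
        = (\<Sum>j\<in>{1..d i}. (p i j - p i (j - 1)) * z i j)"
      using L True by (intro sum.cong) auto
    with sum_stair_weight_breakpoint[OF perm True s, of zz "p i"] B[rule_format, OF True] True
    show ?thesis by (simp add: grid_point_def coord_perm_pair in_B_def)
  next
    case False
    then show ?thesis using x0 by (simp add: grid_point_def)
  qed
  have "(\<Sum>t\<in>{0..d 1 + d 2}. ?w t * snd (snd (?P t))) = stair_rhs (psi f p \<rho>) d s zz"
    using sum_stair_weight_psi[of d s zz "psi f p \<rho>"] by (simp add: grid_point_def psi_def perm_pair_def)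
  with x z show ?thesis by (simp add: point_sum_def fun_eq_iff)
qed

lemma sorted_staircase_decomposition:
  assumes \<rho>: "\<forall>i\<in>{1,2}. \<rho> i permutes {0..d i}"
    and x0: "\<forall>i. i \<notin> {1,2} \<longrightarrow> x i = 0" and z0: "\<forall>i j. \<not> (i \<in> {1,2} \<and> j \<in> {1..d i}) \<longrightarrow> z i j = 0"
    and B: "\<forall>i\<in>{1,2}. in_B (d i) (p i) (x i) (z i)"
    and L: "\<forall>i\<in>{1,2}. \<forall>j\<in>{1..d i}. z i j = Lmap (d i) (\<rho> i) (zz i) j"
  obtains s where "is_staircase d s" "staircase_sorts d s zz"
    "point_sum {0..d 1 + d 2} (stair_weight d s zz) (\<lambda>t. grid_point d p f (perm_pair \<rho> (jpt s t)))
       = (x, z, stair_rhs (psi f p \<rho>) d s zz)"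
proof -
  have "in_Delta (d i) (zz i)" if i: "i \<in> {1,2}" for i
  proof (rule in_Delta_cong)
    have perm: "\<rho> i permutes {0..d i}" using \<rho> i by auto
    show "in_Delta (d i) (Lmap (d i) (inv (\<rho> i)) (z i))"
      using in_Delta_Lmap[OF permutes_inv[OF perm]] B i by (auto simp: in_B_def)
    have "\<forall>j\<in>{1..d i}. z i j = Lmap (d i) (\<rho> i) (zz i) j" using L i by auto
    then show "\<forall>j\<in>{1..d i}. Lmap (d i) (inv (\<rho> i)) (z i) j = zz i j"
      using Lmap_inverse_on[OF perm] by metis
  qed
  then have "staircase_sorts d (merge_staircase d zz) zz" by (simp add: merge_staircase_sorts)
  then show ?thesis
    using that is_staircase_merge point_sum_staircase[OF \<rho> x0 z0 B L is_staircase_merge] by blast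
qed

lemma stair_rhs_attains_grid_value:
  assumes \<rho>: "\<forall>i\<in>{1,2}. \<rho> i permutes {0..d i}" and c: "c \<in> grid d"
    and L: "\<forall>i\<in>{1,2}. \<forall>j\<in>{1..d i}. unary_pair c i j = Lmap (d i) (\<rho> i) (zz i) j"
  obtains s where "is_staircase d s"
    "stair_rhs (psi f p \<rho>) d s zz = f 1 (p 1 (fst c)) * f 2 (p 2 (snd c))"
proof -
  let ?c = "perm_pair (\<lambda>i. inv (\<rho> i)) c"
  have grid: "?c \<in> grid d"
    using perm_pair_in_grid[OF _ c, of "\<lambda>i. inv (\<rho> i)"] \<rho> by (simp add: permutes_inv)
  obtain s where s: "is_staircase d s" "jpt s (fst ?c + snd ?c) = ?c" using staircase_through[OF grid] .
  have "zz i j = unary_pair ?c i j" if i: "i \<in> {1,2}" and j: "j \<in> {1..d i}" for i j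
  proof -
    have perm: "\<rho> i permutes {0..d i}" using \<rho> i by auto
    have "\<forall>j\<in>{1..d i}. unary_pair c i j = Lmap (d i) (\<rho> i) (unary_pair ?c i) j"
      using unary_pair_eq_Lmap[OF \<rho> c i] by simp
    moreover have "\<forall>j\<in>{1..d i}. unary_pair c i j = Lmap (d i) (\<rho> i) (zz i) j" using L i by auto
    ultimately show ?thesis using Lmap_inverse_on[OF perm _ j] by metis
  qed
  then have "stair_rhs (psi f p \<rho>) d s zz = stair_rhs (psi f p \<rho>) d s (unary_pair ?c)"
    by (intro stair_rhs_cong[OF s(1)]) simp
  also have "\<dots> = f 1 (p 1 (fst c)) * f 2 (p 2 (snd c))"
    using stair_rhs_through[OF s(1) grid s(2)] psi_perm_pair_inv[OF \<rho>] by simp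
  finally show ?thesis using that s(1) by blast
qed

lemma comb_between:
  assumes "L \<le> \<mu>" "\<mu> \<le> U"
  obtains \<theta> where "0 \<le> \<theta>" "\<theta> \<le> 1" "(x, z, \<mu>) = comb \<theta> (x, z, U) (x, z, L)"
proof (cases "L = U")
  case True
  then show ?thesis using assms that[of 1] by (simp add: comb_def)
next
  case False
  define \<theta> where "\<theta> = (\<mu> - L) / (U - L)"
  have "L < U" using assms False by simp
  then have "0 \<le> \<theta>" "\<theta> \<le> 1" "\<theta> * (U - L) = \<mu> - L"
    using assms by (simp_all add: \<theta>_def divide_simps)
  moreover from this(3) have "\<mu> = \<theta> * U + (1 - \<theta>) * L" by (simp add: algebra_simps)
  then have "(x, z, \<mu>) = comb \<theta> (x, z, U) (x, z, L)" by (simp add: comb_def fun_eq_iff algebra_simps)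
  ultimately show ?thesis using that by blast
qed

locale staircase_formulation =
  fixes d :: "nat \<Rightarrow> nat" and p :: "nat \<Rightarrow> nat \<Rightarrow> real" and f :: "nat \<Rightarrow> real \<Rightarrow> real"
    and \<sigma> \<tau> :: "nat \<Rightarrow> nat \<Rightarrow> nat"
  assumes \<sigma>_perm: "\<forall>i\<in>{1,2}. \<sigma> i permutes {0..d i}"
    and \<tau>_perm: "\<forall>i\<in>{1,2}. \<tau> i permutes {0..d i}"
    and \<sigma>_supermodular: "supermodular_grid d (psi f p \<sigma>)"
    and \<tau>_submodular: "supermodular_grid d (\<lambda>c. - psi f p \<tau> c)"
begin

lemma grid_point_mem_Qset:
  assumes c: "c \<in> grid d" shows "grid_point d p f c \<in> Qset d p f \<sigma> \<tau>"
proof -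
  let ?c' = "perm_pair (\<lambda>i. inv (\<sigma> i)) c" and ?c'' = "perm_pair (\<lambda>i. inv (\<tau> i)) c"
  let ?\<mu> = "f 1 (p 1 (fst c)) * f 2 (p 2 (snd c))"
  have grid: "?c' \<in> grid d" "?c'' \<in> grid d"
    using perm_pair_in_grid[OF _ c, of "\<lambda>i. inv (\<sigma> i)"] perm_pair_in_grid[OF _ c, of "\<lambda>i. inv (\<tau> i)"]
      \<sigma>_perm \<tau>_perm by (simp_all add: permutes_inv)
  have "?\<mu> \<le> stair_rhs (psi f p \<sigma>) d s (unary_pair ?c')" if "is_staircase d s" for s
    using supermodular_le_stair_rhs[OF that \<sigma>_supermodular grid(1)] psi_perm_pair_inv[OF \<sigma>_perm] by simp
  moreover have "stair_rhs (psi f p \<tau>) d s (unary_pair ?c'') \<le> ?\<mu>" if "is_staircase d s" for s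
    using supermodular_le_stair_rhs[OF that \<tau>_submodular grid(2)] psi_perm_pair_inv[OF \<tau>_perm]
    by (simp add: stair_rhs_uminus)
  moreover have "in_B (d i) (p i) (p i (coord c i)) (\<lambda>j. if j \<in> {1..d i} then unary_pair c i j else 0)"
    if "i \<in> {1,2}" for i
  proof -
    have "coord c i \<le> d i" using c that by (auto simp: mem_grid_coord)
    from in_B_unary_iff[OF this] show ?thesis by (simp add: unary_pair_def)
  qed
  moreover note unary_pair_eq_Lmap[OF \<sigma>_perm c] unary_pair_eq_Lmap[OF \<tau>_perm c]
  ultimately show ?thesis
    unfolding grid_point_def
    by (intro mem_QsetI[where z' = "unary_pair ?c'" and z'' = "unary_pair ?c''"]) auto
qed

lemma binary_mem_Qset:
  assumes "v \<in> Qset d p f \<sigma> \<tau>" "binary_z d v" shows "v \<in> grid_point d p f ` grid d"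
proof -
  obtain x z \<mu> where v: "v = (x, z, \<mu>)" by (cases v)
  from assms(1)[unfolded v] show ?thesis
  proof (cases rule: mem_QsetE)
    case Q: (1 z' z'')
    have "\<forall>i\<in>{1,2}. \<forall>j\<in>{1..d i}. z i j \<in> {0, 1}" using assms(2) v by (simp add: binary_z_def)
    with Q(3) obtain c where c: "c \<in> grid d" "\<forall>i\<in>{1,2}. x i = p i (coord c i)"
      and z: "\<forall>i\<in>{1,2}. \<forall>j\<in>{1..d i}. z i j = unary_pair c i j"
      by (rule binary_in_B_grid)
    have "unary_pair c i j = Lmap (d i) (\<sigma> i) (z' i) j" "unary_pair c i j = Lmap (d i) (\<tau> i) (z'' i) j"
      if "i \<in> {1,2}" "j \<in> {1..d i}" for i j
      using z[rule_format, OF that] Q(4,5)[rule_format, OF that] by simp_all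
    then have "\<forall>i\<in>{1,2}. \<forall>j\<in>{1..d i}. unary_pair c i j = Lmap (d i) (\<sigma> i) (z' i) j"
      "\<forall>i\<in>{1,2}. \<forall>j\<in>{1..d i}. unary_pair c i j = Lmap (d i) (\<tau> i) (z'' i) j" by blast+
    from stair_rhs_attains_grid_value[OF \<sigma>_perm c(1) this(1)]
      stair_rhs_attains_grid_value[OF \<tau>_perm c(1) this(2)]
    have "\<mu> = f 1 (p 1 (fst c)) * f 2 (p 2 (snd c))"
      using Q(6,7) by (metis order_antisym)
    with Q(1,2) c(2) z have "v = grid_point d p f c" unfolding v by (intro grid_point_eqI)
    then show ?thesis using c(1) by blast
  qed
qed

lemma staircase_point_sum:
  assumes \<rho>: "\<forall>i\<in>{1,2}. \<rho> i permutes {0..d i}" and s: "is_staircase d s" "staircase_sorts d s zz"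
    and v: "v = point_sum {0..d 1 + d 2} (stair_weight d s zz)
      (\<lambda>t. grid_point d p f (perm_pair \<rho> (jpt s t)))"
  shows "v \<in> Qset d p f \<sigma> \<tau>" and "is_vertex v (Qset d p f \<sigma> \<tau>) \<Longrightarrow> binary_z d v"
proof -
  have convex: "comb_convex (Qset d p f \<sigma> \<tau>)" using Qset_comb_convex[OF \<sigma>_perm \<tau>_perm] .
  have w: "\<forall>t\<in>{0..d 1 + d 2}. 0 \<le> stair_weight d s zz t" "sum (stair_weight d s zz) {0..d 1 + d 2} = 1"
    using stair_weight_nonneg[OF s(2)] sum_stair_weight by auto
  have P: "(\<lambda>t. grid_point d p f (perm_pair \<rho> (jpt s t))) ` {0..d 1 + d 2} \<subseteq> Qset d p f \<sigma> \<tau>"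
    using grid_point_mem_Qset[OF perm_pair_in_grid[OF \<rho> jpt_in_grid[OF s(1)]]] by auto
  show "v \<in> Qset d p f \<sigma> \<tau>" using point_sum_mem[OF convex _ w P] v by simp
  show "binary_z d v" if "is_vertex v (Qset d p f \<sigma> \<tau>)"
    using is_vertex_point_sum[OF convex that _ w P v] binary_z_grid_point by fastforce
qed

lemma is_vertex_binary:
  assumes vertex: "is_vertex v (Qset d p f \<sigma> \<tau>)" shows "binary_z d v"
proof -
  obtain x z \<mu> where v: "v = (x, z, \<mu>)" by (cases v)
  from vertex[unfolded v is_vertex_def, THEN conjunct1] show ?thesis
  proof (cases rule: mem_QsetE)
    case Q: (1 z' z'')
    obtain s' where s': "is_staircase d s'" "staircase_sorts d s' z'"
      and U: "point_sum {0..d 1 + d 2} (stair_weight d s' z')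
          (\<lambda>t. grid_point d p f (perm_pair \<sigma> (jpt s' t)))
        = (x, z, stair_rhs (psi f p \<sigma>) d s' z')"
      using sorted_staircase_decomposition[OF \<sigma>_perm Q(1-4)] .
    obtain s'' where s'': "is_staircase d s''" "staircase_sorts d s'' z''"
      and L: "point_sum {0..d 1 + d 2} (stair_weight d s'' z'')
          (\<lambda>t. grid_point d p f (perm_pair \<tau> (jpt s'' t)))
        = (x, z, stair_rhs (psi f p \<tau>) d s'' z'')"
      using sorted_staircase_decomposition[OF \<tau>_perm Q(1-3,5)] .
    note U_point = staircase_point_sum[OF \<sigma>_perm s' U[symmetric]]
    note L_point = staircase_point_sum[OF \<tau>_perm s'' L[symmetric]]
    obtain \<theta> where "0 \<le> \<theta>" "\<theta> \<le> 1"
      "v = comb \<theta> (x, z, stair_rhs (psi f p \<sigma>) d s' z') (x, z, stair_rhs (psi f p \<tau>) d s'' z'')"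
      using comb_between[of "stair_rhs (psi f p \<tau>) d s'' z''" \<mu> "stair_rhs (psi f p \<sigma>) d s' z'"]
        Q(6,7) s'(1) s''(1) v by auto
    then have "v = (x, z, stair_rhs (psi f p \<sigma>) d s' z') \<or> v = (x, z, stair_rhs (psi f p \<tau>) d s'' z'')"
      using is_vertex_comb[OF vertex U_point(1) L_point(1)] by blast
    then show ?thesis by (elim disjE) (use U_point(2) L_point(2) vertex in simp_all)
  qed
qed

lemma binary_part_Qset: "{v \<in> Qset d p f \<sigma> \<tau>. binary_z d v} = grid_point d p f ` grid d"
proof (intro equalityI subsetI)
  fix v assume "v \<in> {v \<in> Qset d p f \<sigma> \<tau>. binary_z d v}"
  then show "v \<in> grid_point d p f ` grid d" using binary_mem_Qset by simp
next
  fix v assume "v \<in> grid_point d p f ` grid d"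
  then show "v \<in> {v \<in> Qset d p f \<sigma> \<tau>. binary_z d v}"
    using grid_point_mem_Qset binary_z_grid_point by auto
qed

theorem ideal_formulation:
  "ideal_MIP_formulation (Qset d p f \<sigma> \<tau>) (binary_z d) proj_xmu (Sset d p f)"
  unfolding ideal_MIP_formulation_def binary_part_Qset Sset_eq_grid_points
  by (simp add: is_vertex_binary)

end

theorem proposition3:
  fixes d :: "nat \<Rightarrow> nat" and p :: "nat \<Rightarrow> nat \<Rightarrow> real" and f :: "nat \<Rightarrow> real \<Rightarrow> real"
    and \<sigma> \<tau> :: "nat \<Rightarrow> nat \<Rightarrow> nat"
  assumes d_pos: "\<forall>i\<in>{1,2}. d i \<ge> 1"
    and p_incr: "\<forall>i\<in>{1,2}. \<forall>j. j < d i \<longrightarrow> p i j < p i (j + 1)"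
    and \<sigma>_perm: "\<forall>i\<in>{1,2}. \<sigma> i permutes {0..d i}"
    and \<tau>_perm: "\<forall>i\<in>{1,2}. \<tau> i permutes {0..d i}"
    and \<sigma>_sorted: "\<forall>i\<in>{1,2}. \<forall>k. k < d i \<longrightarrow>
                    f i (p i (\<sigma> i k)) \<le> f i (p i (\<sigma> i (k + 1)))"
    and \<tau>1_sorted: "\<forall>k. k < d 1 \<longrightarrow> f 1 (p 1 (\<tau> 1 k)) \<le> f 1 (p 1 (\<tau> 1 (k + 1)))"
    and \<tau>2_sorted: "\<forall>k. k < d 2 \<longrightarrow> f 2 (p 2 (\<tau> 2 k)) \<ge> f 2 (p 2 (\<tau> 2 (k + 1)))"
  shows "ideal_MIP_formulation (Qset d p f \<sigma> \<tau>) (binary_z d) proj_xmu (Sset d p f)"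
proof -
  have "psi f p \<sigma> = (\<lambda>c. f 1 (p 1 (\<sigma> 1 (fst c))) * f 2 (p 2 (\<sigma> 2 (snd c))))"
    by (simp add: fun_eq_iff psi_def)
  then have \<sigma>_supermodular: "supermodular_grid d (psi f p \<sigma>)"
    using supermodular_grid_prod[of d "\<lambda>k. f 1 (p 1 (\<sigma> 1 k))" "\<lambda>k. f 2 (p 2 (\<sigma> 2 k))"] \<sigma>_sorted by simp
  have "(\<lambda>c. - psi f p \<tau> c) = (\<lambda>c. f 1 (p 1 (\<tau> 1 (fst c))) * - f 2 (p 2 (\<tau> 2 (snd c))))"
    by (simp add: fun_eq_iff psi_def)
  then have \<tau>_submodular: "supermodular_grid d (\<lambda>c. - psi f p \<tau> c)"
    using supermodular_grid_prod[of d "\<lambda>k. f 1 (p 1 (\<tau> 1 k))" "\<lambda>k. - f 2 (p 2 (\<tau> 2 k))"]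
      \<tau>1_sorted \<tau>2_sorted by simp
  interpret staircase_formulation d p f \<sigma> \<tau>
    using \<sigma>_perm \<tau>_perm \<sigma>_supermodular \<tau>_submodular by unfold_locales
  show ?thesis by (rule ideal_formulation)
qed

end
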